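(* Let $\mathscr P$ be a polymatroid and fix a lexicographic order on $\mathbb N^p$. Then $\displaystyle\sum_{\mathbf n\in I(\mathscr P)}(-1)^{\mathrm{rk}(\mathscr P)-|\mathbf n|}c_{\mathbf n}(\mathscr P)=1$.
   Context: Notation: $[p]=\{1,\dots,p\}$; $\mathbf e_i$ is the $i$th standard basis vector; $\mathbf e_J=\sum_{j\in J}\mathbf e_j$; $|\mathbf n|=n_1+\dots+n_p$; $\le$ is componentwise. Polymatroid: a finite set $\mathscr P\subseteq\mathbb N^p$ that is homogeneous (all $\mathbf u\in\mathscr P$ have the same $|\mathbf u|$, the rank $\mathrm{rk}(\mathscr P)$) and M-convex: for all $\mathbf u,\mathbf v\in\mathscr P$ and $i$ with $u_i>v_i$ there is $j$ with $u_j<v_j$ and $\mathbf u-\mathbf e_i+\mathbf e_j\in\mathscr P$. $I(\mathscr P)=\{\mathbf n\in\mathbb N^p:\mathbf n\le\mathbf u\text{ for some }\mathbf u\in\mathscr P\}$. Lexicographic orders: given a total ordering $\sigma_1,\dots,\sigma_p$ of $[p]$, $\mathbf u\prec\mathbf v$ iff $\mathbf u\neq\mathbf v$ and at the first index (in the order $\sigma_1,\sigma_2,\dots$) where they differ, $\mathbf u$ has the smaller entry. Stalactites: for $\mathbf u\in\mathscr P$, $V\subseteq\mathscr P$, $L(\mathbf u;V)=\{\ell\in[p]:\mathbf u-\mathbf e_\ell+\mathbf e_j\in V\text{ for some }j\}$, $\mathrm{St}(\mathbf u;V)=\{\mathbf u-\mathbf e_J:J\subseteq L(\mathbf u;V)\}$.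 With $\mathscr P=\{\mathbf a_1\prec\dots\prec\mathbf a_r\}$, $c_{\mathbf n}(\mathscr P)$ is the number of $k$ with $\mathbf n\in\mathrm{St}(\mathbf a_k;\{\mathbf a_1,\dots,\mathbf a_{k-1}\})$. *)

theory Defs
  imports Main
begin

text \<open>Vectors in N^p are functions nat => nat supported on [p] = {1..p}.\<close>

definition vecs :: "nat \<Rightarrow> (nat \<Rightarrow> nat) set" where
  "vecs p = {u. \<forall>i. i \<notin> {1..p} \<longrightarrow> u i = 0}"

definition unitv :: "nat \<Rightarrow> nat \<Rightarrow> nat" ("\<e>") where
  "unitv i = (\<lambda>k. if k = i then 1 else 0)"

definition unitset :: "nat set \<Rightarrow> nat \<Rightarrow> nat" where
  "unitset J = (\<lambda>k. if k \<in> J then 1 else 0)"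

definition vnorm :: "nat \<Rightarrow> (nat \<Rightarrow> nat) \<Rightarrow> nat" where
  "vnorm p u = (\<Sum>i\<in>{1..p}. u i)"

text \<open>u - e_i + e_j, used only when u i \<ge> 1 (so it stays in N^p).\<close>
definition exch :: "(nat \<Rightarrow> nat) \<Rightarrow> nat \<Rightarrow> nat \<Rightarrow> nat \<Rightarrow> nat" where
  "exch u i j = (\<lambda>k. u k - unitv i k + unitv j k)"

definition polymatroid :: "nat \<Rightarrow> (nat \<Rightarrow> nat) set \<Rightarrow> bool" where
  "polymatroid p P \<longleftrightarrow>
     finite P \<and> P \<noteq> {} \<and> P \<subseteq> vecs p \<and>
     (\<forall>u\<in>P. \<forall>v\<in>P. vnorm p u = vnorm p v) \<and>
     (\<forall>u\<in>P. \<forall>v\<in>P. \<forall>i\<in>{1..p}. u i > v i \<longrightarrow>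
        (\<exists>j\<in>{1..p}. u j < v j \<and> exch u i j \<in> P))"

definition rk :: "nat \<Rightarrow> (nat \<Rightarrow> nat) set \<Rightarrow> nat" where
  "rk p P = vnorm p (SOME u. u \<in> P)"

definition Iset :: "nat \<Rightarrow> (nat \<Rightarrow> nat) set \<Rightarrow> (nat \<Rightarrow> nat) set" where
  "Iset p P = {n \<in> vecs p. \<exists>u\<in>P. \<forall>i. n i \<le> u i}"

definition lex_less :: "nat \<Rightarrow> (nat \<Rightarrow> nat) \<Rightarrow> (nat \<Rightarrow> nat) \<Rightarrow> (nat \<Rightarrow> nat) \<Rightarrow> bool" where
  "lex_less p \<sigma> u v \<longleftrightarrow> u \<noteq> v \<and>
     (\<exists>k\<in>{1..p}. (\<forall>m\<in>{1..p}. m < k \<longrightarrow> u (\<sigma> m) = v (\<sigma> m)) \<and> u (\<sigma> k) < v (\<sigma> k))"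

definition Lset :: "nat \<Rightarrow> (nat \<Rightarrow> nat) \<Rightarrow> (nat \<Rightarrow> nat) set \<Rightarrow> nat set" where
  "Lset p u V = {l \<in> {1..p}. u l \<ge> 1 \<and> (\<exists>j\<in>{1..p}. exch u l j \<in> V)}"

definition St :: "nat \<Rightarrow> (nat \<Rightarrow> nat) \<Rightarrow> (nat \<Rightarrow> nat) set \<Rightarrow> (nat \<Rightarrow> nat) set" where
  "St p u V = {(\<lambda>k. u k - unitset J k) | J. J \<subseteq> Lset p u V}"

text \<open>c_n(P): number of k with n in St(a_k; {a_1,...,a_(k-1)}), where a_1 < ... < a_r
  enumerates P in the lexicographic order; {a_1..a_(k-1)} = {v in P. v < a_k}.\<close>
definition cnum :: "nat \<Rightarrow> (nat \<Rightarrow> nat) \<Rightarrow> (nat \<Rightarrow> nat) set \<Rightarrow> (nat \<Rightarrow> nat) \<Rightarrow> nat" where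
  "cnum p \<sigma> P n = card {u \<in> P. n \<in> St p u {v \<in> P. lex_less p \<sigma> v u}}"

end

theory Submission
  imports Defs
begin

(* Enumerate P lexicographically as a_1 < ... < a_r and swap the order of summation: the
   contribution of a_k is the alternating sum over the Boolean lattice
   St(a_k) = {a_k - e_J. J \<subseteq> L(a_k)}, where |a_k - e_J| = rk - |J|, so it is 1 if
   L(a_k) is empty and 0 otherwise. By the exchange axiom L(a_k) is empty only for the
   lexicographic minimum: if v < u, exchanging u at the first coordinate where it exceeds v
   moves a unit to a later coordinate and gives a basis that is lexicographically below u. *)

lemma sum_Pow_minus_one_power_card:
  assumes "finite L"
  shows "(\<Sum>J\<in>Pow L. (-1::'a::ring_1) ^ card J) = (if L = {} then 1 else 0)"
proof (cases "L = {}")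
  case False
  then have "card {J. J \<subseteq> L \<and> {} \<subseteq> J \<and> even (card J)} = card {J. J \<subseteq> L \<and> {} \<subseteq> J \<and> odd (card J)}"
    using assms by (intro card_subsupersets_even_odd) auto
  then show ?thesis using assms False by (simp add: sum_alternating_cancels Pow_def)
qed simp

lemma sum_mult_card_incidence:
  fixes f :: "'b \<Rightarrow> 'c::comm_semiring_1"
  assumes "finite A" "finite I" "\<And>a. a \<in> A \<Longrightarrow> S a \<subseteq> I"
  shows "(\<Sum>n\<in>I. f n * of_nat (card {a\<in>A. n \<in> S a})) = (\<Sum>a\<in>A. \<Sum>n\<in>S a. f n)"
proof -
  have "(\<Sum>n\<in>I. f n * of_nat (card {a\<in>A. n \<in> S a})) = (\<Sum>n\<in>I. \<Sum>a\<in>A. if n \<in> S a then f n else 0)"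
    using assms(1) by (intro sum.cong refl) (simp add: mult.commute flip: sum.inter_filter)
  also have "\<dots> = (\<Sum>a\<in>A. \<Sum>n\<in>I. if n \<in> S a then f n else 0)"
    by (rule sum.swap)
  also have "\<dots> = (\<Sum>a\<in>A. \<Sum>n\<in>S a. f n)"
  proof (rule sum.cong[OF refl])
    fix a assume "a \<in> A"
    then have "{n\<in>I. n \<in> S a} = S a"
      using assms(3) by blast
    then show "(\<Sum>n\<in>I. if n \<in> S a then f n else 0) = (\<Sum>n\<in>S a. f n)"
      using sum.inter_filter[OF assms(2)] by metis
  qed
  finally show ?thesis .
qed

lemma vecs_outside_zero: "u \<in> vecs p \<Longrightarrow> i \<notin> {1..p} \<Longrightarrow> u i = 0"
  by (simp add: vecs_def)

lemma vnorm_unitset: "J \<subseteq> {1..p} \<Longrightarrow> vnorm p (unitset J) = card J"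
  by (simp add: vnorm_def unitset_def sum.If_cases Int_absorb1)

lemma vnorm_diff:
  assumes "\<And>i. n i \<le> u i"
  shows "vnorm p (\<lambda>k. u k - n k) = vnorm p u - vnorm p n"
  using assms by (simp add: vnorm_def sum_subtractf_nat)

lemma vnorm_mono:
  assumes "\<And>i. n i \<le> u i"
  shows "vnorm p n \<le> vnorm p u"
  using assms by (simp add: vnorm_def sum_mono)

lemma polymatroidD:
  assumes "polymatroid p P"
  shows "finite P" "P \<noteq> {}" "P \<subseteq> vecs p" "\<And>u v. u \<in> P \<Longrightarrow> v \<in> P \<Longrightarrow> vnorm p u = vnorm p v"
    and "\<And>u v i. u \<in> P \<Longrightarrow> v \<in> P \<Longrightarrow> i \<in> {1..p} \<Longrightarrow> v i < u i
      \<Longrightarrow> \<exists>j\<in>{1..p}. u j < v j \<and> exch u i j \<in> P"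
  using assms unfolding polymatroid_def by (elim conjE; blast)+

lemma rk_eq_vnorm:
  assumes "polymatroid p P" "u \<in> P"
  shows "rk p P = vnorm p u"
proof -
  have "(SOME u. u \<in> P) \<in> P"
    using assms(2) by (auto simp: some_in_eq)
  then show ?thesis
    using assms polymatroidD(4) unfolding rk_def by blast
qed

lemma finite_vecs_bounded: "finite {n \<in> vecs p. \<forall>i. n i \<le> u i}"
proof (rule finite_subset)
  let ?M = "Max (u ` {1..p})"
  show "{n \<in> vecs p. \<forall>i. n i \<le> u i}
      \<subseteq> {n. \<forall>i. (i \<in> {1..p} \<longrightarrow> n i \<in> {..?M}) \<and> (i \<notin> {1..p} \<longrightarrow> n i = 0)}"
  proof (intro subsetI CollectI allI conjI impI)
    fix n i assume n: "n \<in> {n \<in> vecs p. \<forall>i. n i \<le> u i}"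
    show "n i = 0" if "i \<notin> {1..p}"
      using n that vecs_outside_zero by blast
    show "n i \<in> {..?M}" if "i \<in> {1..p}"
    proof -
      have "u i \<le> ?M"
        using that by (intro Max_ge) auto
      moreover have "n i \<le> u i"
        using n by blast
      ultimately show ?thesis
        by simp
    qed
  qed
qed (intro finite_set_of_finite_funs finite_atLeastAtMost finite_atMost)

lemma finite_Iset: "finite P \<Longrightarrow> finite (Iset p P)"
proof -
  assume "finite P"
  have "Iset p P = (\<Union>u\<in>P. {n \<in> vecs p. \<forall>i. n i \<le> u i})"
    by (auto simp: Iset_def)
  then show ?thesis
    using \<open>finite P\<close> finite_vecs_bounded by simp
qed

lemma St_subset_Iset:
  assumes "u \<in> P" "P \<subseteq> vecs p"
  shows "St p u V \<subseteq> Iset p P"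
proof
  fix n assume "n \<in> St p u V"
  then have "\<forall>i. n i \<le> u i" "n \<in> vecs p"
    using assms by (auto simp: St_def vecs_def)
  then show "n \<in> Iset p P"
    using assms(1) by (auto simp: Iset_def)
qed

lemma unitset_le:
  assumes "J \<subseteq> L" "\<forall>l\<in>L. 1 \<le> u l"
  shows "unitset J i \<le> u i"
  using assms by (auto simp: unitset_def)

lemma inj_on_minus_unitset:
  assumes "\<forall>l\<in>L. 1 \<le> u l"
  shows "inj_on (\<lambda>J k. u k - unitset J k) (Pow L)"
proof (rule inj_onI)
  have recover: "J = {l\<in>L. u l - unitset J l < u l}" if "J \<subseteq> L" for J
    using that assms by (force simp: unitset_def)
  fix J1 J2 assume "J1 \<in> Pow L" "J2 \<in> Pow L" "(\<lambda>k. u k - unitset J1 k) = (\<lambda>k. u k - unitset J2 k)"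
  then show "J1 = J2"
    using recover[of J1] recover[of J2] by (simp add: fun_eq_iff)
qed

lemma sum_St_minus_one_power:
  "(\<Sum>n\<in>St p u V. (-1::int) ^ (vnorm p u - vnorm p n)) = (if Lset p u V = {} then 1 else 0)"
proof -
  define L where "L = Lset p u V"
  have L: "L \<subseteq> {1..p}" "\<forall>l\<in>L. 1 \<le> u l"
    by (auto simp: L_def Lset_def)
  have "St p u V = (\<lambda>J k. u k - unitset J k) ` Pow L"
    by (auto simp: St_def L_def)
  then have "(\<Sum>n\<in>St p u V. (-1::int) ^ (vnorm p u - vnorm p n))
      = (\<Sum>J\<in>Pow L. (-1) ^ (vnorm p u - vnorm p (\<lambda>k. u k - unitset J k)))"
    using inj_on_minus_unitset[OF L(2)] by (simp add: sum.reindex)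
  also have "\<dots> = (\<Sum>J\<in>Pow L. (-1) ^ card J)"
  proof (rule sum.cong[OF refl])
    fix J assume "J \<in> Pow L"
    then have le: "\<And>i. unitset J i \<le> u i" and "J \<subseteq> {1..p}"
      using L unitset_le by auto
    then have "vnorm p (\<lambda>k. u k - unitset J k) = vnorm p u - card J" "card J \<le> vnorm p u"
      using vnorm_diff[of "unitset J" u p] vnorm_mono[of "unitset J" u p] le
      by (simp_all add: vnorm_unitset)
    then show "(-1::int) ^ (vnorm p u - vnorm p (\<lambda>k. u k - unitset J k)) = (-1) ^ card J"
      by simp
  qed
  also have "\<dots> = (if L = {} then 1 else 0)"
    using L(1) by (simp add: sum_Pow_minus_one_power_card finite_subset)
  finally show ?thesis
    by (simp add: L_def)
qed

lemma lex_less_irrefl: "\<not> lex_less p \<sigma> u u"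
  by (simp add: lex_less_def)

lemma lex_less_trans:
  assumes "lex_less p \<sigma> u v" "lex_less p \<sigma> v w"
  shows "lex_less p \<sigma> u w"
proof -
  obtain k1 where k1: "k1 \<in> {1..p}" "\<forall>m\<in>{1..p}. m < k1 \<longrightarrow> u (\<sigma> m) = v (\<sigma> m)"
      "u (\<sigma> k1) < v (\<sigma> k1)"
    using assms(1) unfolding lex_less_def by blast
  obtain k2 where k2: "k2 \<in> {1..p}" "\<forall>m\<in>{1..p}. m < k2 \<longrightarrow> v (\<sigma> m) = w (\<sigma> m)"
      "v (\<sigma> k2) < w (\<sigma> k2)"
    using assms(2) unfolding lex_less_def by blast
  have "min k1 k2 \<in> {1..p}" "\<forall>m\<in>{1..p}. m < min k1 k2 \<longrightarrow> u (\<sigma> m) = w (\<sigma> m)"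
    using k1 k2 by auto
  moreover have "u (\<sigma> (min k1 k2)) < w (\<sigma> (min k1 k2))"
    using k1 k2 by (cases k1 k2 rule: linorder_cases) auto
  ultimately show ?thesis
    unfolding lex_less_def by (metis less_irrefl)
qed

lemma lex_less_total:
  assumes "bij_betw \<sigma> {1..p} {1..p}" "u \<in> vecs p" "w \<in> vecs p" "u \<noteq> w"
  shows "lex_less p \<sigma> u w \<or> lex_less p \<sigma> w u"
proof -
  obtain i where i: "u i \<noteq> w i"
    using assms(4) by (metis ext)
  then have "i \<in> {1..p}"
    using assms(2,3) by (metis vecs_outside_zero)
  moreover have "\<sigma> ` {1..p} = {1..p}"
    using assms(1) by (simp add: bij_betw_def)
  ultimately obtain m where "m \<in> {1..p}" "u (\<sigma> m) \<noteq> w (\<sigma> m)"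
    using i by (metis imageE)
  then obtain k where k: "k \<in> {1..p}" "u (\<sigma> k) \<noteq> w (\<sigma> k)"
      and before: "\<forall>m\<in>{1..p}. m < k \<longrightarrow> u (\<sigma> m) = w (\<sigma> m)"
    using exists_least_iff[where P = "\<lambda>k. k \<in> {1..p} \<and> u (\<sigma> k) \<noteq> w (\<sigma> k)"] by blast
  consider "u (\<sigma> k) < w (\<sigma> k)" | "w (\<sigma> k) < u (\<sigma> k)"
    using k(2) by linarith
  then show ?thesis
  proof cases
    case 1
    then show ?thesis
      using k(1) before assms(4) unfolding lex_less_def by blast
  next
    case 2
    then show ?thesis
      using k(1) before assms(4) unfolding lex_less_def by (metis (no_types, lifting))
  qed
qed

lemma lex_less_exists_minimal:
  assumes "finite P" "P \<noteq> {}"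
  shows "\<exists>u\<in>P. \<forall>v\<in>P. \<not> lex_less p \<sigma> v u"
  using assms
proof (induction P rule: finite_ne_induct)
  case (singleton x)
  then show ?case by (simp add: lex_less_irrefl)
next
  case (insert x F)
  then obtain m where "m \<in> F" "\<forall>v\<in>F. \<not> lex_less p \<sigma> v m" by blast
  then show ?case
    by (metis insert_iff lex_less_irrefl lex_less_trans)
qed

lemma card_lex_minimal_eq_1:
  assumes "finite P" "P \<noteq> {}" "P \<subseteq> vecs p" "bij_betw \<sigma> {1..p} {1..p}"
  shows "card {u\<in>P. \<forall>v\<in>P. \<not> lex_less p \<sigma> v u} = 1"
proof -
  obtain m where m: "m \<in> P" "\<forall>v\<in>P. \<not> lex_less p \<sigma> v m"
    using lex_less_exists_minimal[OF assms(1,2)] by blast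
  have "{u\<in>P. \<forall>v\<in>P. \<not> lex_less p \<sigma> v u} = {m}"
    using m lex_less_total[OF assms(4)] assms(3) by blast
  then show ?thesis by simp
qed

lemma exch_lex_less:
  assumes "inj_on \<sigma> {1..p}" "k \<in> {1..p}" "m \<in> {1..p}" "k < m" "1 \<le> u (\<sigma> k)"
  shows "lex_less p \<sigma> (exch u (\<sigma> k) (\<sigma> m)) u"
proof -
  let ?w = "exch u (\<sigma> k) (\<sigma> m)"
  have "\<sigma> k \<noteq> \<sigma> m"
    using assms(1-4) by (metis inj_on_contraD less_irrefl)
  then have "?w (\<sigma> k) < u (\<sigma> k)"
    using assms(5) by (simp add: exch_def unitv_def)
  moreover have "?w (\<sigma> l) = u (\<sigma> l)" if "l \<in> {1..p}" "l < k" for l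
  proof -
    have "\<sigma> l \<noteq> \<sigma> k" "\<sigma> l \<noteq> \<sigma> m"
      using that assms(1-4) by (metis inj_on_contraD less_irrefl less_trans)+
    then show ?thesis by (simp add: exch_def unitv_def)
  qed
  ultimately show ?thesis
    using assms(2) unfolding lex_less_def by (metis less_irrefl)
qed

lemma Lset_predecessors_empty_iff:
  assumes poly: "polymatroid p P" and bij: "bij_betw \<sigma> {1..p} {1..p}" and "u \<in> P"
  shows "Lset p u {v\<in>P. lex_less p \<sigma> v u} = {} \<longleftrightarrow> (\<forall>v\<in>P. \<not> lex_less p \<sigma> v u)"
proof
  assume empty: "Lset p u {v\<in>P. lex_less p \<sigma> v u} = {}"
  show "\<forall>v\<in>P. \<not> lex_less p \<sigma> v u"
  proof (intro ballI notI)
    fix v assume "v \<in> P" "lex_less p \<sigma> v u"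
    then obtain k where k: "k \<in> {1..p}" "v (\<sigma> k) < u (\<sigma> k)"
        and before: "\<forall>m\<in>{1..p}. m < k \<longrightarrow> v (\<sigma> m) = u (\<sigma> m)"
      unfolding lex_less_def by blast
    have "\<sigma> ` {1..p} = {1..p}" "inj_on \<sigma> {1..p}"
      using bij by (simp_all add: bij_betw_def)
    then have "\<sigma> k \<in> {1..p}"
      using k(1) by blast
    then obtain j where j: "j \<in> {1..p}" "u j < v j" "exch u (\<sigma> k) j \<in> P"
      using polymatroidD(5)[OF poly \<open>u \<in> P\<close> \<open>v \<in> P\<close>] k(2) by blast
    then obtain m where m: "m \<in> {1..p}" "\<sigma> m = j"
      using \<open>\<sigma> ` {1..p} = {1..p}\<close> by (metis imageE)
    \<comment> \<open>u and v agree before position k, so the exchange partner lies after it\<close>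
    have "k < m"
      using k before j(2) m by (metis less_asym linorder_neqE_nat)
    then have "lex_less p \<sigma> (exch u (\<sigma> k) j) u"
      using exch_lex_less \<open>inj_on \<sigma> {1..p}\<close> k(1) m k(2) by fastforce
    then have "\<sigma> k \<in> Lset p u {v\<in>P. lex_less p \<sigma> v u}"
      using \<open>\<sigma> k \<in> {1..p}\<close> k(2) j unfolding Lset_def by auto
    then show False
      using empty by blast
  qed
qed (auto simp: Lset_def)

theorem mainTheorem9:
  fixes p :: nat and P :: "(nat \<Rightarrow> nat) set" and \<sigma> :: "nat \<Rightarrow> nat"
  assumes "polymatroid p P"
    and "bij_betw \<sigma> {1..p} {1..p}"
  shows "(\<Sum>n\<in>Iset p P. (-1::int) ^ (rk p P - vnorm p n) * int (cnum p \<sigma> P n)) = 1"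
proof -
  note poly = assms(1) and bij = assms(2)
  define pred where "pred u = {v\<in>P. lex_less p \<sigma> v u}" for u
  have "(\<Sum>n\<in>Iset p P. (-1::int) ^ (rk p P - vnorm p n) * int (cnum p \<sigma> P n))
      = (\<Sum>u\<in>P. \<Sum>n\<in>St p u (pred u). (-1) ^ (rk p P - vnorm p n))"
    unfolding cnum_def pred_def
    using polymatroidD(1,3)[OF poly] finite_Iset St_subset_Iset by (intro sum_mult_card_incidence) auto
  also have "\<dots> = (\<Sum>u\<in>P. if \<forall>v\<in>P. \<not> lex_less p \<sigma> v u then 1 else 0)"
    using rk_eq_vnorm[OF poly] sum_St_minus_one_power Lset_predecessors_empty_iff[OF poly bij]
    by (intro sum.cong) (simp_all add: pred_def)
  also have "\<dots> = int (card {u\<in>P. \<forall>v\<in>P. \<not> lex_less p \<sigma> v u})"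
    using polymatroidD(1)[OF poly] by (simp flip: sum.inter_filter)
  also have "\<dots> = 1"
    using card_lex_minimal_eq_1 polymatroidD(1-3)[OF poly] bij by simp
  finally show ?thesis .
qed

end
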